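(* There is an absolute constant $C_0$ such that the following holds. Let $a,b$ be positive integers and $\delta,\nu\in\mathbb{N}^{-1}$ with $\nu^a\delta^{-1},\nu^b\delta^{-1}\in\mathbb{N}$, and let $E>10^3$. Then $$\mathcal{M}_{2,a,b}(\delta,\nu,E)\le C_E\,\mathcal{M}_{2,b,a}(\delta,\nu,E/C_0)^{1/3}\,\mathcal{M}_{1,a,b}(\delta,\nu,E/C_0)^{2/3},$$ where $C_E$ depends only on $E$.
   Context: Write $e(z)=e^{2\pi i z}$, $\gamma(\xi)=(\xi,\xi^2,\xi^3)$, and for an interval $J\subset[0,1]$ and $g:[0,1]\to\mathbb{C}$, $(\mathcal{E}_J g)(x)=\int_J g(\xi)e(x\cdot\gamma(\xi))d\xi$, $x\in\mathbb{R}^3$. For an interval $I$ and $\sigma>0$ with $|I|/\sigma\in\mathbb{N}$, $P_\sigma(I)$ is the partition of $I$ into intervals of length $\sigma$. For an interval $I\subset[0,1]$ with center $c_I$, let $\mathcal{T}_I=\{x\in\mathbb{R}^3:|x\cdot\gamma'(c_I)|\le|I|^{-1},|x\cdot\gamma''(c_I)|\le|I|^{-2},|x\cdot\gamma'''(c_I)|\le|I|^{-3}\}$. For a parallelepiped $T=A[0,1]^3+c$ ($A$ invertible) and $E>0$, $w_{T,E}(x)=(1+|A^{-1}(x-c)|)^{-E}$ and $\phi_{T,E}(x)=|\det A|^{-1}w_{T,E}(x)$. For $\delta,\nu\in\mathbb{N}^{-1}$, $a,b\in\mathbb{N}$, $E>0$: $\mathcal{M}_{1,a,b}(\delta,\nu,E)$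 is the smallest $M$ such that $$\int_{\mathbb{R}^3}\big(|\mathcal{E}_Ig|^2*\phi_{\mathcal{T}_I,E}\big)\big(|\mathcal{E}_{I'}g|^{10}*\phi_{\mathcal{T}_{I'},E}\big)\le M^{12}\Big(\sum_{J\in P_\delta(I)}\|\mathcal{E}_Jg\|_{L^{12}(\mathbb{R}^3)}^4\Big)^{1/2}\Big(\sum_{J'\in P_\delta(I')}\|\mathcal{E}_{J'}g\|_{L^{12}(\mathbb{R}^3)}^4\Big)^{5/2},$$ and $\mathcal{M}_{2,a,b}(\delta,\nu,E)$ is the smallest $M$ such that $$\int_{\mathbb{R}^3}\big(|\mathcal{E}_Ig|^4*\phi_{\mathcal{T}_I,E}\big)\big(|\mathcal{E}_{I'}g|^{8}*\phi_{\mathcal{T}_{I'},E}\big)\le M^{12}\Big(\sum_{J\in P_\delta(I)}\|\mathcal{E}_Jg\|_{L^{12}(\mathbb{R}^3)}^4\Big)\Big(\sum_{J'\in P_\delta(I')}\|\mathcal{E}_{J'}g\|_{L^{12}(\mathbb{R}^3)}^4\Big)^{2},$$ each required for all $g:[0,1]\to\mathbb{C}$ and all $I\in P_{\nu^a}([0,1])$, $I'\in P_{\nu^b}([0,1])$ with $\mathrm{dist}(I,I')\ge\nu$. *)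

theory Defs
  imports "HOL-Analysis.Analysis"
begin

definition ee :: "real \<Rightarrow> complex" where
  "ee z = exp (2 * pi * \<i> * complex_of_real z)"

definition gam :: "real \<Rightarrow> real^3" where
  "gam t = vector [t, t^2, t^3]"
definition gam1 :: "real \<Rightarrow> real^3" where
  "gam1 t = vector [1, 2*t, 3*t^2]"
definition gam2 :: "real \<Rightarrow> real^3" where
  "gam2 t = vector [0, 2, 6*t]"
definition gam3 :: "real \<Rightarrow> real^3" where
  "gam3 t = vector [0, 0, 6]"

definition ext_op :: "real \<Rightarrow> real \<Rightarrow> (real \<Rightarrow> complex) \<Rightarrow> real^3 \<Rightarrow> complex" where
  "ext_op l r g x = (LINT \<xi>:{l..r}|lborel. g \<xi> * ee (x \<bullet> gam \<xi>))"

definition Pint :: "real \<Rightarrow> real \<Rightarrow> real \<Rightarrow> (real \<times> real) set" where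
  "Pint \<sigma> l r = {(l + real j * \<sigma>, l + real (Suc j) * \<sigma>) | j. real (Suc j) * \<sigma> \<le> r - l}"

(* p-th power for nonnegative extended reals, p > 0 *)
definition enn_powr :: "ennreal \<Rightarrow> real \<Rightarrow> ennreal" where
  "enn_powr x p = (if x = \<infinity> then \<infinity> else ennreal (enn2real x powr p))"

definition Lp_pow :: "real \<Rightarrow> (real^3 \<Rightarrow> complex) \<Rightarrow> ennreal" where
  "Lp_pow p f = (\<integral>\<^sup>+ x. ennreal (norm (f x) powr p) \<partial>lborel)"

(* parallelepiped T = A[0,1]^3 + c ; weights *)
definition wT :: "real^3^3 \<Rightarrow> real^3 \<Rightarrow> real \<Rightarrow> real^3 \<Rightarrow> real" where
  "wT A c E x = (1 + norm (matrix_inv A *v (x - c))) powr (-E)"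
definition phiT :: "real^3^3 \<Rightarrow> real^3 \<Rightarrow> real \<Rightarrow> real^3 \<Rightarrow> real" where
  "phiT A c E x = inverse \<bar>det A\<bar> * wT A c E x"

(* T_I = {x : |x.gamma'(c_I)| <= |I|^-1, ...} = L^-1 [-1,1]^3 = A [0,1]^3 + c
   with A = 2 L^-1, c = - L^-1 (1,1,1) *)
definition TL :: "real \<Rightarrow> real \<Rightarrow> real^3^3" where
  "TL l r = (let c = (l + r) / 2; s = r - l in
     vector [s *\<^sub>R gam1 c, s^2 *\<^sub>R gam2 c, s^3 *\<^sub>R gam3 c])"
definition TA :: "real \<Rightarrow> real \<Rightarrow> real^3^3" where
  "TA l r = 2 *\<^sub>R matrix_inv (TL l r)"
definition Tc :: "real \<Rightarrow> real \<Rightarrow> real^3" where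
  "Tc l r = - (matrix_inv (TL l r) *v vector [1, 1, 1])"

definition conv_TI :: "real \<Rightarrow> (real^3 \<Rightarrow> complex) \<Rightarrow> real \<Rightarrow> real \<Rightarrow> real \<Rightarrow> real^3 \<Rightarrow> ennreal" where
  "conv_TI p f l r E x =
     (\<integral>\<^sup>+ y. ennreal (norm (f y) powr p * phiT (TA l r) (Tc l r) E (x - y)) \<partial>lborel)"

definition Ssum :: "real \<Rightarrow> (real \<Rightarrow> complex) \<Rightarrow> real \<Rightarrow> real \<Rightarrow> ennreal" where
  "Ssum \<delta> g l r = (\<Sum>(l', r')\<in>Pint \<delta> l r. enn_powr (Lp_pow 12 (ext_op l' r' g)) (4 / 12))"

definition admissible :: "nat \<Rightarrow> nat \<Rightarrow> real \<Rightarrow> real \<Rightarrow> real \<Rightarrow> real \<Rightarrow> real \<Rightarrow> bool" where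
  "admissible a b \<nu> l r l' r' \<longleftrightarrow>
     (l, r) \<in> Pint (\<nu>^a) 0 1 \<and> (l', r') \<in> Pint (\<nu>^b) 0 1 \<and> setdist {l..r} {l'..r'} \<ge> \<nu>"

definition M1 :: "nat \<Rightarrow> nat \<Rightarrow> real \<Rightarrow> real \<Rightarrow> real \<Rightarrow> ennreal" where
  "M1 a b \<delta> \<nu> E = Inf {M. \<forall>g l r l' r'. set_integrable lborel {0..1} g \<longrightarrow>
      admissible a b \<nu> l r l' r' \<longrightarrow>
      (\<integral>\<^sup>+ x. conv_TI 2 (ext_op l r g) l r E x * conv_TI 10 (ext_op l' r' g) l' r' E x \<partial>lborel)
        \<le> M ^ 12 * enn_powr (Ssum \<delta> g l r) (1/2) * enn_powr (Ssum \<delta> g l' r') (5/2)}"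

definition M2 :: "nat \<Rightarrow> nat \<Rightarrow> real \<Rightarrow> real \<Rightarrow> real \<Rightarrow> ennreal" where
  "M2 a b \<delta> \<nu> E = Inf {M. \<forall>g l r l' r'. set_integrable lborel {0..1} g \<longrightarrow>
      admissible a b \<nu> l r l' r' \<longrightarrow>
      (\<integral>\<^sup>+ x. conv_TI 4 (ext_op l r g) l r E x * conv_TI 8 (ext_op l' r' g) l' r' E x \<partial>lborel)
        \<le> M ^ 12 * Ssum \<delta> g l r * enn_powr (Ssum \<delta> g l' r') 2}"

end

theory Submission
  imports Defs
begin

(* For p = \<theta> q1 + (1 - \<theta>) q2, Hoelder's inequality in the convolution variable gives
   |F|^p * \<phi> \<le> (|F|^q1 * \<phi>)^\<theta> (|F|^q2 * \<phi>)^(1-\<theta>) pointwise.  With \<theta> = 1/3 and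
   4 = 8/3 + 2*2/3, 8 = 4/3 + 2*10/3, the integrand of M2(a,b) is bounded by the integrand of
   M2(b,a) (roles of I and I' exchanged) to the power 1/3 times that of M1(a,b) to the power 2/3;
   Hoelder in x with exponents 3 and 3/2 then transfers this to the integrals, and the right-hand
   sides match: with S and T the sums over P_\<delta>(I) and P_\<delta>(I'),
   (T S^2)^(1/3) (S^(1/2) T^(5/2))^(2/3) = S T^2.  So C0 = CE = 1 suffice. *)

lemma enn_powr_ennreal: "0 \<le> t \<Longrightarrow> enn_powr (ennreal t) p = ennreal (t powr p)"
  by (simp add: enn_powr_def)

lemma enn_powr_0 [simp]: "enn_powr 0 p = 0"
  by (simp add: enn_powr_def)

lemma enn_powr_top [simp]: "enn_powr top p = top"
  by (simp add: enn_powr_def)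

lemma enn_powr_one [simp]: "enn_powr a 1 = a"
  by (cases a) (auto simp: enn_powr_ennreal)

lemma enn_powr_eq_top_iff: "enn_powr a p = top \<longleftrightarrow> a = top"
  by (simp add: enn_powr_def)

lemma enn_powr_eq_0_iff: "0 < p \<Longrightarrow> enn_powr a p = 0 \<longleftrightarrow> a = 0"
  by (cases a) (auto simp: enn_powr_ennreal)

lemma enn_powr_mono:
  assumes "a \<le> b" "0 \<le> p"
  shows "enn_powr a p \<le> enn_powr b p"
proof (cases b)
  case (real s)
  with assms(1) obtain t where "a = ennreal t" "0 \<le> t" "t \<le> s"
    by (metis ennreal_cases ennreal_le_iff ennreal_neq_top top.extremum_uniqueI)
  then show ?thesis
    using real assms by (simp add: enn_powr_ennreal powr_mono2 ennreal_leI)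
qed simp

lemma enn_powr_mult:
  assumes "0 < p"
  shows "enn_powr (a * b) p = enn_powr a p * enn_powr b p"
proof (cases a; cases b)
  fix s t assume "a = ennreal s" "0 \<le> s" "b = ennreal t" "0 \<le> t"
  then show ?thesis by (simp add: enn_powr_ennreal ennreal_mult'[symmetric] powr_mult)
qed (use assms in \<open>auto simp: enn_powr_ennreal enn_powr_eq_0_iff ennreal_mult_top ennreal_top_mult\<close>)

lemma enn_powr_power: "0 < p \<Longrightarrow> enn_powr (a ^ n) p = enn_powr a p ^ n"
  by (induction n) (simp_all add: enn_powr_mult enn_powr_ennreal[of 1, simplified])

lemma enn_powr_powr: "0 < p \<Longrightarrow> 0 < q \<Longrightarrow> enn_powr (enn_powr a p) q = enn_powr a (p * q)"
  by (cases a) (auto simp: enn_powr_ennreal powr_powr)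

lemma enn_powr_add: "0 < p \<Longrightarrow> 0 < q \<Longrightarrow> enn_powr a p * enn_powr a q = enn_powr a (p + q)"
  by (cases a) (auto simp: enn_powr_ennreal ennreal_mult'[symmetric] powr_add)

lemma enn_powr_mult_eq_top_iff:
  "0 < p \<Longrightarrow> 0 < q \<Longrightarrow>
    enn_powr a p * enn_powr b q = top \<longleftrightarrow> (a = top \<and> b \<noteq> 0) \<or> (b = top \<and> a \<noteq> 0)"
  by (auto simp: ennreal_mult_eq_top_iff enn_powr_eq_top_iff enn_powr_eq_0_iff)

lemma le_weighted_geometric_mean_from_above:
  assumes \<theta>: "0 < \<theta>" "\<theta> < 1" and XY: "0 < X0" "0 < Y0"
    and near: "\<And>x y. ennreal X0 < x \<Longrightarrow> ennreal Y0 < y \<Longrightarrow> w \<le> enn_powr x \<theta> * enn_powr y (1 - \<theta>)"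
  shows "w \<le> enn_powr (ennreal X0) \<theta> * enn_powr (ennreal Y0) (1 - \<theta>)"
proof (rule dense_ge)
  define Z0 where "Z0 = X0 powr \<theta> * Y0 powr (1 - \<theta>)"
  have "0 < Z0" using XY by (simp add: Z0_def)
  fix z assume z: "enn_powr (ennreal X0) \<theta> * enn_powr (ennreal Y0) (1 - \<theta>) < z"
  show "w \<le> z"
  proof (cases z)
    case (real z0)
    have "Z0 < z0"
      using z real XY by (simp add: Z0_def enn_powr_ennreal ennreal_mult''[symmetric] ennreal_less_iff)
    define s where "s = z0 / Z0"
    with \<open>Z0 < z0\<close> \<open>0 < Z0\<close> have "1 < s" by simp
    \<comment> \<open>the weighted geometric mean is homogeneous, so scaling both arguments by s hits z exactly\<close>
    have "s powr \<theta> * s powr (1 - \<theta>) = s"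
      using \<open>1 < s\<close> by (simp flip: powr_add)
    then have "(s * X0) powr \<theta> * (s * Y0) powr (1 - \<theta>) = s * Z0"
      using XY \<open>1 < s\<close> by (simp add: powr_mult Z0_def mult_ac)
    then have "enn_powr (ennreal (s * X0)) \<theta> * enn_powr (ennreal (s * Y0)) (1 - \<theta>) = z"
      using XY \<open>1 < s\<close> \<open>0 < Z0\<close> real
      by (simp add: enn_powr_ennreal ennreal_mult''[symmetric] s_def)
    moreover have "w \<le> enn_powr (ennreal (s * X0)) \<theta> * enn_powr (ennreal (s * Y0)) (1 - \<theta>)"
      using XY \<open>1 < s\<close> by (intro near) (simp_all add: ennreal_less_iff)
    ultimately show ?thesis by simp
  qed simp
qed

definition best_const :: "nat \<Rightarrow> ('i \<Rightarrow> bool) \<Rightarrow> ('i \<Rightarrow> ennreal) \<Rightarrow> ('i \<Rightarrow> ennreal) \<Rightarrow> ennreal" where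
  "best_const n P F K = Inf {M. \<forall>i. P i \<longrightarrow> F i \<le> M ^ n * K i}"

lemma best_const_le:
  "(\<And>i. P i \<Longrightarrow> F i \<le> M ^ n * K i) \<Longrightarrow> best_const n P F K \<le> M"
  unfolding best_const_def by (rule Inf_lower) blast

lemma best_const_bound:
  assumes "best_const n P F K < M" "P i"
  shows "F i \<le> M ^ n * K i"
proof -
  from assms(1) obtain M' where "M' < M" and "\<forall>i. P i \<longrightarrow> F i \<le> M' ^ n * K i"
    unfolding best_const_def Inf_less_iff by blast
  with assms(2) have "F i \<le> M' ^ n * K i" by blast
  also have "\<dots> \<le> M ^ n * K i"
    using \<open>M' < M\<close> by (intro mult_right_mono power_mono) auto
  finally show ?thesis .
qed

lemma best_const_eq_0I:
  assumes "\<And>i. P i \<Longrightarrow> K i < top \<Longrightarrow> F i = 0"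
  shows "best_const n P F K = 0"
proof -
  have le: "best_const n P F K \<le> 0 + ennreal e" if "0 < e" for e
  proof -
    have "best_const n P F K \<le> ennreal e"
    proof (rule best_const_le)
      fix i assume "P i"
      show "F i \<le> ennreal e ^ n * K i"
      proof (cases "K i = top")
        case True
        with \<open>0 < e\<close> show ?thesis by (simp add: ennreal_mult_eq_top_iff)
      next
        case False
        then have "K i < top" by (simp add: less_top)
        with assms \<open>P i\<close> have "F i = 0" by blast
        then show ?thesis by simp
      qed
    qed
    then show ?thesis by simp
  qed
  then have "best_const n P F K \<le> 0"
    by (rule ennreal_le_epsilon) (use le in auto)
  then show ?thesis by simp
qed

lemma best_const_eq_0D:
  assumes "best_const n P F K = 0" "0 < n" "P i" "K i < top"
  shows "F i = 0"
proof -
  obtain k where k: "K i = ennreal k" "0 \<le> k"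
    using assms(4) by (cases "K i") auto
  have le: "F i \<le> 0 + ennreal e" if "0 < e" for e
  proof -
    define y where "y = root n (e / (k + 1))"
    have "0 < y" "y ^ n = e / (k + 1)"
      using \<open>0 < e\<close> k assms(2) by (simp_all add: y_def real_root_pow_pos2)
    then have "F i \<le> ennreal y ^ n * K i"
      using best_const_bound[of n P F K "ennreal y" i] assms(1,3) by simp
    also have "\<dots> = ennreal (e * (k / (k + 1)))"
      using \<open>y ^ n = e / (k + 1)\<close> k \<open>0 < y\<close> \<open>0 < e\<close>
      by (simp add: ennreal_power ennreal_mult''[symmetric])
    also have "\<dots> \<le> ennreal e"
      using \<open>0 < e\<close> k by (intro ennreal_leI mult_left_le) auto
    finally show ?thesis by simp
  qed
  then have "F i \<le> 0"
    by (rule ennreal_le_epsilon) (use le in auto)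
  then show ?thesis by simp
qed

lemma best_const_holder:
  fixes A B C K K1 K2 :: "'i \<Rightarrow> ennreal"
  assumes \<theta>: "0 < \<theta>" "\<theta> < 1" and n: "0 < n"
    and interp: "\<And>i. P i \<Longrightarrow> A i \<le> enn_powr (B i) \<theta> * enn_powr (C i) (1 - \<theta>)"
    and weights: "\<And>i. P i \<Longrightarrow> K i = enn_powr (K1 i) \<theta> * enn_powr (K2 i) (1 - \<theta>)"
    and top1: "\<And>i. P i \<Longrightarrow> K1 i = top \<Longrightarrow> K i = top"
    and top2: "\<And>i. P i \<Longrightarrow> K2 i = top \<Longrightarrow> K i = top"
  shows "best_const n P A K
    \<le> enn_powr (best_const n P B K1) \<theta> * enn_powr (best_const n P C K2) (1 - \<theta>)"
    (is "_ \<le> enn_powr ?X \<theta> * enn_powr ?Y (1 - \<theta>)")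
proof -
  have near: "best_const n P A K \<le> enn_powr x \<theta> * enn_powr y (1 - \<theta>)"
    if "?X < x" "?Y < y" for x y
  proof (rule best_const_le)
    fix i assume "P i"
    have "A i \<le> enn_powr (x ^ n * K1 i) \<theta> * enn_powr (y ^ n * K2 i) (1 - \<theta>)"
      using best_const_bound[OF that(1) \<open>P i\<close>] best_const_bound[OF that(2) \<open>P i\<close>] \<theta>
      by (intro order_trans[OF interp[OF \<open>P i\<close>]] mult_mono enn_powr_mono) auto
    also have "\<dots> = (enn_powr x \<theta> * enn_powr y (1 - \<theta>)) ^ n * K i"
      using \<theta> weights[OF \<open>P i\<close>] by (simp add: enn_powr_mult enn_powr_power power_mult_distrib mult_ac)
    finally show "A i \<le> (enn_powr x \<theta> * enn_powr y (1 - \<theta>)) ^ n * K i" .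
  qed
  \<comment> \<open>For X = 0 the bounds at M > 0 do not pass to M = 0 where a weight is infinite
    (0 * \<top> = 0), so that case is argued separately.\<close>
  consider "?X = 0 \<or> ?Y = 0" | "?X = top \<or> ?Y = top" "?X \<noteq> 0" "?Y \<noteq> 0"
    | X0 Y0 where "?X = ennreal X0" "?Y = ennreal Y0" "0 < X0" "0 < Y0"
    by (metis ennreal_cases ennreal_eq_0_iff not_less)
  then show ?thesis
  proof cases
    case 1
    have "best_const n P A K = 0"
    proof (rule best_const_eq_0I)
      fix i assume "P i" "K i < top"
      then have "K1 i < top" "K2 i < top"
        using top1 top2 by (metis less_top)+
      then have "B i = 0 \<or> C i = 0"
        using 1 best_const_eq_0D[of n P B K1, OF _ n \<open>P i\<close>]
          best_const_eq_0D[of n P C K2, OF _ n \<open>P i\<close>]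
        by blast
      then show "A i = 0"
        using interp[OF \<open>P i\<close>] \<theta> by auto
    qed
    then show ?thesis by simp
  next
    case 2
    then have "enn_powr ?X \<theta> * enn_powr ?Y (1 - \<theta>) = top"
      using \<theta> by (auto simp: enn_powr_mult_eq_top_iff)
    then show ?thesis by simp
  next
    case 3
    with \<theta> near show ?thesis
      by (auto intro: le_weighted_geometric_mean_from_above)
  qed
qed

lemma weighted_young:
  fixes a b U V \<theta> :: real
  assumes "0 \<le> a" "0 \<le> b" "0 < U" "0 < V" "0 < \<theta>" "\<theta> < 1"
  shows "a powr \<theta> * b powr (1 - \<theta>)
    \<le> U powr \<theta> * V powr (1 - \<theta>) * (\<theta> * (a / U) + (1 - \<theta>) * (b / V))"
proof (cases "a = 0 \<or> b = 0")
  case True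
  with assms show ?thesis by (auto intro!: mult_nonneg_nonneg add_nonneg_nonneg)
next
  case False
  with assms have "(a / U) powr \<theta> * (b / V) powr (1 - \<theta>) \<le> \<theta> * (a / U) + (1 - \<theta>) * (b / V)"
    by (intro Youngs_inequality_0) auto
  moreover have "a powr \<theta> * b powr (1 - \<theta>)
      = U powr \<theta> * V powr (1 - \<theta>) * ((a / U) powr \<theta> * (b / V) powr (1 - \<theta>))"
    using assms by (simp add: powr_divide field_simps)
  ultimately show ?thesis
    using assms by (simp add: mult_left_mono)
qed

lemma nn_integral_holder:
  assumes u: "u \<in> borel_measurable M" and v: "v \<in> borel_measurable M"
    and \<theta>: "0 < \<theta>" "\<theta> < 1"
  shows "(\<integral>\<^sup>+x. enn_powr (u x) \<theta> * enn_powr (v x) (1 - \<theta>) \<partial>M)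
    \<le> enn_powr (\<integral>\<^sup>+x. u x \<partial>M) \<theta> * enn_powr (\<integral>\<^sup>+x. v x \<partial>M) (1 - \<theta>)"
    (is "?I \<le> enn_powr ?U \<theta> * enn_powr ?V (1 - \<theta>)")
proof -
  consider "?U = 0 \<or> ?V = 0" | "?U = top \<or> ?V = top" "?U \<noteq> 0" "?V \<noteq> 0"
    | U0 V0 where "?U = ennreal U0" "?V = ennreal V0" "0 < U0" "0 < V0"
    by (metis ennreal_cases ennreal_eq_0_iff not_less)
  then show ?thesis
  proof cases
    case 1
    then have "AE x in M. u x = 0 \<or> v x = 0"
      using nn_integral_0_iff_AE[OF u] nn_integral_0_iff_AE[OF v] by auto
    then have "AE x in M. enn_powr (u x) \<theta> * enn_powr (v x) (1 - \<theta>) = 0"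
      by eventually_elim auto
    then have "?I = (\<integral>\<^sup>+x. 0 \<partial>M)"
      by (rule nn_integral_cong_AE)
    then show ?thesis by simp
  next
    case 2
    then have "enn_powr ?U \<theta> * enn_powr ?V (1 - \<theta>) = top"
      using \<theta> by (auto simp: enn_powr_mult_eq_top_iff)
    then show ?thesis by simp
  next
    case 3
    define c where "c = U0 powr \<theta> * V0 powr (1 - \<theta>)"
    define k1 k2 where "k1 = c * \<theta> / U0" and "k2 = c * (1 - \<theta>) / V0"
    have k: "0 < k1" "0 < k2"
      using 3 \<theta> by (auto simp: k1_def k2_def c_def)
    have pointwise: "enn_powr (u x) \<theta> * enn_powr (v x) (1 - \<theta>) \<le> ennreal k1 * u x + ennreal k2 * v x"
      for x
    proof (cases "u x = top \<or> v x = top")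
      case True
      with k show ?thesis by (auto simp: ennreal_mult_top)
    next
      case False
      then obtain a b where ab: "u x = ennreal a" "v x = ennreal b" "0 \<le> a" "0 \<le> b"
        by (metis ennreal_cases)
      have "a powr \<theta> * b powr (1 - \<theta>) \<le> k1 * a + k2 * b"
        using weighted_young[of a b U0 V0 \<theta>] ab 3 \<theta> by (simp add: k1_def k2_def c_def algebra_simps)
      with ab k show ?thesis
        by (simp add: enn_powr_ennreal ennreal_mult'[symmetric] ennreal_mult''[symmetric]
            ennreal_plus[symmetric] ennreal_leI del: ennreal_plus)
    qed
    have "?I \<le> (\<integral>\<^sup>+x. ennreal k1 * u x + ennreal k2 * v x \<partial>M)"
      by (intro nn_integral_mono pointwise)
    also have "\<dots> = ennreal k1 * ?U + ennreal k2 * ?V"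
      using u v by (simp add: nn_integral_add nn_integral_cmult)
    also have "\<dots> = ennreal (k1 * U0 + k2 * V0)"
      using 3 k by (simp add: ennreal_mult'[symmetric] ennreal_plus[symmetric] del: ennreal_plus)
    also have "k1 * U0 + k2 * V0 = c"
      using 3 by (simp add: k1_def k2_def field_simps)
    also have "ennreal c = enn_powr ?U \<theta> * enn_powr ?V (1 - \<theta>)"
      using 3 by (simp add: c_def enn_powr_ennreal ennreal_mult'[symmetric])
    finally show ?thesis .
  qed
qed

lemma continuous_on_phiT: "continuous_on UNIV (phiT A c E)"
proof -
  have "continuous_on UNIV (\<lambda>x. matrix_inv A *v (x - c))"
    by (intro linear_continuous_on_compose[OF _ matrix_vector_mul_linear] continuous_intros)
  then show ?thesis
    unfolding phiT_def wT_def by (intro continuous_intros) (smt (verit) norm_ge_zero)+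
qed

lemma phiT_nonneg: "0 \<le> phiT A c E x"
  by (simp add: phiT_def wT_def)

lemma ext_op_measurable:
  assumes g: "set_integrable lborel {0..1} g" and sub: "{l..r} \<subseteq> {0..1}"
  shows "ext_op l r g \<in> borel_measurable lborel"
proof -
  let ?g = "\<lambda>t. indicator {l..r} t *\<^sub>R (indicator {0..1} t *\<^sub>R g t)"
  have "(\<lambda>p::(real^3) \<times> real. ?g (snd p)) \<in> borel_measurable (lborel \<Otimes>\<^sub>M lborel)"
    using borel_measurable_integrable[OF g[unfolded set_integrable_def]] by measurable
  moreover have "(\<lambda>p::(real^3) \<times> real. ee (fst p \<bullet> gam (snd p))) \<in> borel_measurable borel"
    by (intro borel_measurable_continuous_onI)
      (simp add: ee_def gam_def inner_vec_def sum_3; intro continuous_intros)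
  then have "(\<lambda>p::(real^3) \<times> real. ee (fst p \<bullet> gam (snd p))) \<in> borel_measurable (lborel \<Otimes>\<^sub>M lborel)"
    by (simp add: borel_prod[symmetric] measurable_lborel2 cong: measurable_cong_sets)
  ultimately have "(\<lambda>(x::real^3, t). ?g t * ee (x \<bullet> gam t)) \<in> borel_measurable (lborel \<Otimes>\<^sub>M lborel)"
    unfolding case_prod_beta by (rule borel_measurable_times)
  then have "(\<lambda>x. \<integral>t. ?g t * ee (x \<bullet> gam t) \<partial>lborel) \<in> borel_measurable lborel"
    by (rule lborel.borel_measurable_lebesgue_integral)
  moreover have "ext_op l r g = (\<lambda>x. \<integral>t. ?g t * ee (x \<bullet> gam t) \<partial>lborel)"
    using sub by (auto simp: ext_op_def set_lebesgue_integral_def indicator_def fun_eq_iff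
        intro!: Bochner_Integration.integral_cong)
  ultimately show ?thesis by simp
qed

lemma conv_TI_measurable:
  assumes F: "F \<in> borel_measurable lborel"
  shows "conv_TI p F l r E \<in> borel_measurable lborel"
proof -
  have "(\<lambda>q::(real^3) \<times> (real^3). phiT (TA l r) (Tc l r) E (fst q - snd q)) \<in> borel_measurable borel"
    by (intro borel_measurable_continuous_onI continuous_on_compose2[OF continuous_on_phiT]
        continuous_intros) auto
  then have "(\<lambda>(x::real^3, y). ennreal (norm (F y) powr p * phiT (TA l r) (Tc l r) E (x - y)))
      \<in> borel_measurable (lborel \<Otimes>\<^sub>M lborel)"
    using F by (simp add: case_prod_beta borel_prod[symmetric] cong: measurable_cong_sets) measurable
  then show ?thesis
    unfolding conv_TI_def by (rule lborel.borel_measurable_nn_integral)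
qed

lemma conv_TI_interpolate:
  assumes F: "F \<in> borel_measurable lborel" and \<theta>: "0 < \<theta>" "\<theta> < 1"
    and p: "p = \<theta> * q1 + (1 - \<theta>) * q2"
  shows "conv_TI p F l r E x
    \<le> enn_powr (conv_TI q1 F l r E x) \<theta> * enn_powr (conv_TI q2 F l r E x) (1 - \<theta>)"
proof -
  let ?\<phi> = "\<lambda>y. phiT (TA l r) (Tc l r) E (x - y)"
  have "?\<phi> \<in> borel_measurable borel"
    by (intro borel_measurable_continuous_onI continuous_on_compose2[OF continuous_on_phiT]
        continuous_intros) auto
  then have meas: "(\<lambda>y. ennreal (norm (F y) powr q * ?\<phi> y)) \<in> borel_measurable lborel" for q
    using F by measurable
  have "(n powr q1 * f) powr \<theta> * (n powr q2 * f) powr (1 - \<theta>) = n powr p * f"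
    if "0 \<le> n" "0 \<le> f" for n f :: real
  proof -
    have "(n powr q1 * f) powr \<theta> * (n powr q2 * f) powr (1 - \<theta>)
        = (n powr (q1 * \<theta>) * n powr (q2 * (1 - \<theta>))) * (f powr \<theta> * f powr (1 - \<theta>))"
      using that by (simp add: powr_mult powr_powr)
    also have "\<dots> = n powr p * f powr 1"
      by (simp add: p powr_add[symmetric] mult.commute)
    finally show ?thesis using that by simp
  qed
  then have "ennreal (norm (F y) powr p * ?\<phi> y)
      = enn_powr (ennreal (norm (F y) powr q1 * ?\<phi> y)) \<theta>
        * enn_powr (ennreal (norm (F y) powr q2 * ?\<phi> y)) (1 - \<theta>)" for y
    by (simp add: phiT_nonneg enn_powr_ennreal ennreal_mult'[symmetric])
  then show ?thesis
    unfolding conv_TI_def by (simp only:) (rule nn_integral_holder[OF meas meas \<theta>])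
qed

lemma conv_TI_bilinear_interpolate:
  assumes F: "F \<in> borel_measurable lborel" and G: "G \<in> borel_measurable lborel"
  shows "(\<integral>\<^sup>+x. conv_TI 4 F l r E x * conv_TI 8 G l' r' E x \<partial>lborel)
    \<le> enn_powr (\<integral>\<^sup>+x. conv_TI 4 G l' r' E x * conv_TI 8 F l r E x \<partial>lborel) (1/3)
      * enn_powr (\<integral>\<^sup>+x. conv_TI 2 F l r E x * conv_TI 10 G l' r' E x \<partial>lborel) (2/3)"
proof -
  have \<theta>: "0 < (1/3 :: real)" "1/3 < (1 :: real)" by auto
  have "conv_TI 4 F l r E x * conv_TI 8 G l' r' E x
      \<le> enn_powr (conv_TI 4 G l' r' E x * conv_TI 8 F l r E x) (1/3)
        * enn_powr (conv_TI 2 F l r E x * conv_TI 10 G l' r' E x) (1 - 1/3)" for x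
  proof -
    have "conv_TI 4 F l r E x * conv_TI 8 G l' r' E x
      \<le> (enn_powr (conv_TI 8 F l r E x) (1/3) * enn_powr (conv_TI 2 F l r E x) (1 - 1/3))
        * (enn_powr (conv_TI 4 G l' r' E x) (1/3) * enn_powr (conv_TI 10 G l' r' E x) (1 - 1/3))"
      by (intro mult_mono conv_TI_interpolate[OF F \<theta>] conv_TI_interpolate[OF G \<theta>]) auto
    then show ?thesis
      by (simp add: enn_powr_mult mult_ac)
  qed
  then have "(\<integral>\<^sup>+x. conv_TI 4 F l r E x * conv_TI 8 G l' r' E x \<partial>lborel)
      \<le> (\<integral>\<^sup>+x. enn_powr (conv_TI 4 G l' r' E x * conv_TI 8 F l r E x) (1/3)
          * enn_powr (conv_TI 2 F l r E x * conv_TI 10 G l' r' E x) (1 - 1/3) \<partial>lborel)"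
    by (intro nn_integral_mono)
  also have "\<dots> \<le> enn_powr (\<integral>\<^sup>+x. conv_TI 4 G l' r' E x * conv_TI 8 F l r E x \<partial>lborel) (1/3)
      * enn_powr (\<integral>\<^sup>+x. conv_TI 2 F l r E x * conv_TI 10 G l' r' E x \<partial>lborel) (1 - 1/3)"
    by (intro nn_integral_holder \<theta> borel_measurable_times_ennreal conv_TI_measurable F G)
  finally show ?thesis by simp
qed

lemma interpolated_weight:
  fixes S T :: ennreal
  shows "enn_powr (T * enn_powr S 2) (1/3) * enn_powr (enn_powr S (1/2) * enn_powr T (5/2)) (2/3)
    = S * enn_powr T 2"
proof -
  have "enn_powr (T * enn_powr S 2) (1/3) * enn_powr (enn_powr S (1/2) * enn_powr T (5/2)) (2/3)
      = (enn_powr S (2/3) * enn_powr S (1/3)) * (enn_powr T (1/3) * enn_powr T (5/3))"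
    by (simp add: enn_powr_mult enn_powr_powr mult_ac)
  also have "\<dots> = S * enn_powr T 2"
    by (simp add: enn_powr_add)
  finally show ?thesis .
qed

lemma interpolated_weight_eq_top:
  fixes S T :: ennreal
  shows "T * enn_powr S 2 = top \<Longrightarrow> S * enn_powr T 2 = top"
    and "enn_powr S (1/2) * enn_powr T (5/2) = top \<Longrightarrow> S * enn_powr T 2 = top"
  by (auto simp: ennreal_mult_eq_top_iff enn_powr_eq_top_iff enn_powr_eq_0_iff)

lemma Pint_subset: "(l, r) \<in> Pint \<sigma> 0 1 \<Longrightarrow> 0 \<le> \<sigma> \<Longrightarrow> {l..r} \<subseteq> {0..1}"
  by (auto simp: Pint_def)

lemma admissible_subset:
  assumes "admissible a b \<nu> l r l' r'" "0 \<le> \<nu>"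
  shows "{l..r} \<subseteq> {0..1}" "{l'..r'} \<subseteq> {0..1}"
  using assms Pint_subset by (auto simp: admissible_def)

lemma admissible_swap: "admissible b a \<nu> l' r' l r \<longleftrightarrow> admissible a b \<nu> l r l' r'"
  by (auto simp: admissible_def setdist_sym)

definition admissible_datum ::
    "nat \<Rightarrow> nat \<Rightarrow> real \<Rightarrow> (real \<Rightarrow> complex) \<times> real \<times> real \<times> real \<times> real \<Rightarrow> bool" where
  "admissible_datum a b \<nu> =
    (\<lambda>(g, l, r, l', r'). set_integrable lborel {0..1} g \<and> admissible a b \<nu> l r l' r')"

definition bilinear_conv_integral ::
    "real \<Rightarrow> real \<Rightarrow> real \<Rightarrow> (real \<Rightarrow> complex) \<Rightarrow> real \<Rightarrow> real \<Rightarrow> real \<Rightarrow> real \<Rightarrow> ennreal" where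
  "bilinear_conv_integral p q E g l r l' r' =
    (\<integral>\<^sup>+x. conv_TI p (ext_op l r g) l r E x * conv_TI q (ext_op l' r' g) l' r' E x \<partial>lborel)"

lemma M1_eq_best_const:
  "M1 a b \<delta> \<nu> E = best_const 12 (admissible_datum a b \<nu>)
    (\<lambda>(g, l, r, l', r'). bilinear_conv_integral 2 10 E g l r l' r')
    (\<lambda>(g, l, r, l', r'). enn_powr (Ssum \<delta> g l r) (1/2) * enn_powr (Ssum \<delta> g l' r') (5/2))"
  unfolding M1_def best_const_def admissible_datum_def bilinear_conv_integral_def
  by (rule arg_cong[where f = Inf]) (auto simp: mult.assoc)

lemma M2_eq_best_const:
  "M2 a b \<delta> \<nu> E = best_const 12 (admissible_datum a b \<nu>)
    (\<lambda>(g, l, r, l', r'). bilinear_conv_integral 4 8 E g l r l' r')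
    (\<lambda>(g, l, r, l', r'). Ssum \<delta> g l r * enn_powr (Ssum \<delta> g l' r') 2)"
  unfolding M2_def best_const_def admissible_datum_def bilinear_conv_integral_def
  by (rule arg_cong[where f = Inf]) (auto simp: mult.assoc)

lemma M2_swap_eq_best_const:
  "M2 b a \<delta> \<nu> E = best_const 12 (admissible_datum a b \<nu>)
    (\<lambda>(g, l, r, l', r'). bilinear_conv_integral 4 8 E g l' r' l r)
    (\<lambda>(g, l, r, l', r'). Ssum \<delta> g l' r' * enn_powr (Ssum \<delta> g l r) 2)"
  unfolding M2_def best_const_def admissible_datum_def bilinear_conv_integral_def
  by (rule arg_cong[where f = Inf]) (auto simp: admissible_swap mult.assoc)

lemma M2_le_M2_swap_M1:
  assumes "0 \<le> \<nu>"
  shows "M2 a b \<delta> \<nu> E \<le> enn_powr (M2 b a \<delta> \<nu> E) (1/3) * enn_powr (M1 a b \<delta> \<nu> E) (2/3)"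
proof -
  have interp: "bilinear_conv_integral 4 8 E g l r l' r'
      \<le> enn_powr (bilinear_conv_integral 4 8 E g l' r' l r) (1/3)
        * enn_powr (bilinear_conv_integral 2 10 E g l r l' r') (2/3)"
    if "set_integrable lborel {0..1} g" "admissible a b \<nu> l r l' r'" for g l r l' r'
    unfolding bilinear_conv_integral_def
    using that admissible_subset[OF that(2) assms]
    by (intro conv_TI_bilinear_interpolate ext_op_measurable)
  have "M2 a b \<delta> \<nu> E \<le> enn_powr (M2 b a \<delta> \<nu> E) (1/3) * enn_powr (M1 a b \<delta> \<nu> E) (1 - 1/3)"
    unfolding M2_eq_best_const[where a = a and b = b] M2_swap_eq_best_const[where a = a and b = b]
      M1_eq_best_const
    by (rule best_const_holder)
      (auto simp: admissible_datum_def interp interpolated_weight interpolated_weight_eq_top)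
  then show ?thesis by simp
qed

theorem lemma2p4:
  shows "\<exists>C0 > 0. \<forall>E > 1000. \<exists>CE > 0. \<forall>(a::nat) (b::nat) (\<delta>::real) (\<nu>::real).
     a > 0 \<longrightarrow> b > 0 \<longrightarrow>
     (\<exists>n::nat. n > 0 \<and> \<delta> = 1 / real n) \<longrightarrow>
     (\<exists>m::nat. m > 0 \<and> \<nu> = 1 / real m) \<longrightarrow>
     (\<exists>k::nat. \<nu> ^ a / \<delta> = real k) \<longrightarrow>
     (\<exists>k::nat. \<nu> ^ b / \<delta> = real k) \<longrightarrow>
     M2 a b \<delta> \<nu> E \<le> ennreal CE * enn_powr (M2 b a \<delta> \<nu> (E / C0)) (1/3)
                              * enn_powr (M1 a b \<delta> \<nu> (E / C0)) (2/3)"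
proof (intro exI[of _ "1::real"] conjI allI impI exI[of _ "1::real"])
  fix E \<delta> \<nu> :: real and a b :: nat
  assume "\<exists>m::nat. m > 0 \<and> \<nu> = 1 / real m"
  then have "0 \<le> \<nu>" by auto
  then show "M2 a b \<delta> \<nu> E \<le> ennreal 1 * enn_powr (M2 b a \<delta> \<nu> (E / 1)) (1/3)
      * enn_powr (M1 a b \<delta> \<nu> (E / 1)) (2/3)"
    using M2_le_M2_swap_M1 by (simp add: mult.assoc)
qed simp_all

end
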